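(* Let $\mathbb{F}\subseteq\mathbb{C}$ be a subfield closed under complex conjugation, $m\ge2$, $N\ge1$, and let $\zeta_1,\dots,\zeta_{m-1}\in\mathcal{P}_N^-[\mathbb{F}]$. If $\mathbf{u}(z)=(u_1,\dots,u_{m-1},\widetilde{u_m})^T$ and $\mathbf{v}(z)=(v_1,\dots,v_{m-1},\widetilde{v_m})^T$, with $u_i,v_i\in\mathcal{P}_N^+[\mathbb{F}]$, are two solutions of the system $(\mathcal{S})$ and $\mathbf{u}(1)=\mathbf{v}(1)$, then $\mathbf{u}(z)=\mathbf{v}(z)$ for every $z\in\mathbb{C}\setminus\{0\}$. In particular, if a solution $\mathbf{u}$ satisfies $\mathbf{u}(1)=0\in\mathbb{F}^m$, then $\mathbf{u}(z)=0$ for all $z\in\mathbb{C}\setminus\{0\}$.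
   Context: For a Laurent polynomial $p(z)=\sum_k c_kz^k$ write $\widetilde{p}(z)=\sum_k\overline{c_k}z^{-k}$. $\mathcal{P}_N^+[\mathbb{F}]=\{\sum_{k=0}^Nc_kz^k: c_k\in\mathbb{F}\}$, $\mathcal{P}_N^-[\mathbb{F}]=\{\sum_{k=1}^Nc_kz^{-k}: c_k\in\mathbb{F}\}$. Let $\mathcal{P}^+$ denote the set of polynomials in $z$ (Laurent polynomials with no negative powers). The system $(\mathcal{S})$ in unknowns $x_1,\dots,x_m$ is $$\zeta_i(z)x_m(z)-\widetilde{x_i}(z)\in\mathcal{P}^+\ (i=1,\dots,m-1),\qquad \sum_{i=1}^{m-1}\zeta_i(z)x_i(z)+\widetilde{x_m}(z)\in\mathcal{P}^+.$$ A vector $(u_1,\dots,u_{m-1},\widetilde{u_m})^T$ with $u_i\in\mathcal{P}_N^+[\mathbb{F}]$ is called a solution of $(\mathcal{S})$ if all these conditions hold with $x_i=u_i$, $i=1,\dots,m$. *)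

theory Defs
  imports Complex_Main "HOL-Computational_Algebra.Polynomial" "HOL-Computational_Algebra.Formal_Laurent_Series"
begin

definition conj_closed_subfield :: "complex set \<Rightarrow> bool" where
  "conj_closed_subfield F \<longleftrightarrow>
     0 \<in> F \<and> 1 \<in> F \<and>
     (\<forall>x\<in>F. \<forall>y\<in>F. x + y \<in> F \<and> x - y \<in> F \<and> x * y \<in> F) \<and>
     (\<forall>x\<in>F. x \<noteq> 0 \<longrightarrow> inverse x \<in> F) \<and>
     (\<forall>x\<in>F. cnj x \<in> F)"

definition in_PNplus :: "complex set \<Rightarrow> nat \<Rightarrow> complex poly \<Rightarrow> bool" where
  "in_PNplus F N p \<longleftrightarrow> degree p \<le> N \<and> (\<forall>k. coeff p k \<in> F)"

text \<open>An element sum_{k=1}^N c_k z^{-k} of P_N^-[F] is encoded by the polynomial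
  q = sum_k c_k X^k with coeff q 0 = 0, degree q <= N, coefficients in F.\<close>
definition in_PNminus :: "complex set \<Rightarrow> nat \<Rightarrow> complex poly \<Rightarrow> bool" where
  "in_PNminus F N q \<longleftrightarrow> coeff q 0 = 0 \<and> degree q \<le> N \<and> (\<forall>k. coeff q k \<in> F)"

definition lp_pos :: "complex poly \<Rightarrow> complex fls" where
  "lp_pos p = (\<Sum>k\<le>degree p. fls_const (coeff p k) * fls_X ^ k)"

definition lp_neg :: "complex poly \<Rightarrow> complex fls" where
  "lp_neg q = (\<Sum>k\<le>degree q. fls_const (coeff q k) * fls_X_inv ^ k)"

definition lp_tilde :: "complex poly \<Rightarrow> complex fls" where
  "lp_tilde p = lp_neg (map_poly cnj p)"

definition tilde_eval :: "complex poly \<Rightarrow> complex \<Rightarrow> complex" where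
  "tilde_eval p z = (\<Sum>k\<le>degree p. cnj (coeff p k) / z ^ k)"

definition in_Pplus :: "complex fls \<Rightarrow> bool" where
  "in_Pplus f \<longleftrightarrow> (\<forall>k<0. fls_nth f k = 0)"

definition is_solution ::
  "complex set \<Rightarrow> nat \<Rightarrow> nat \<Rightarrow> (nat \<Rightarrow> complex poly) \<Rightarrow> (nat \<Rightarrow> complex poly) \<Rightarrow> bool" where
  "is_solution F N m \<zeta> u \<longleftrightarrow>
     (\<forall>i\<in>{1..m}. in_PNplus F N (u i)) \<and>
     (\<forall>i\<in>{1..m-1}. in_Pplus (lp_neg (\<zeta> i) * lp_pos (u m) - lp_tilde (u i))) \<and>
     in_Pplus ((\<Sum>i\<in>{1..m-1}. lp_neg (\<zeta> i) * lp_pos (u i)) + lp_tilde (u m))"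

definition sol_vec :: "nat \<Rightarrow> (nat \<Rightarrow> complex poly) \<Rightarrow> complex \<Rightarrow> nat \<Rightarrow> complex" where
  "sol_vec m u z i = (if i < m then poly (u i) z else tilde_eval (u m) z)"

end

theory Submission
  imports Defs
begin

text \<open>For a solution difference \<open>w\<close> the conditions of (S) combine, through the identity
  \<open>\<Sum>\<^sub>i w\<^sub>i w\<^sub>i\<^sup>~ = w\<^sub>m (\<Sum>\<^sub>i<m \<zeta>\<^sub>i w\<^sub>i + w\<^sub>m\<^sup>~) - \<Sum>\<^sub>i<m w\<^sub>i (\<zeta>\<^sub>i w\<^sub>m - w\<^sub>i\<^sup>~)\<close>, into the statement that
  the Laurent polynomial \<open>S = \<Sum>\<^sub>i w\<^sub>i w\<^sub>i\<^sup>~\<close> has no negative powers. Its coefficients satisfy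
  \<open>S\<^sub>-\<^sub>k = cnj S\<^sub>k\<close>, so \<open>S\<close> is the constant \<open>\<Sum>\<^sub>i \<Sum>\<^sub>k |coeff w\<^sub>i k|\<^sup>2\<close>. On the other hand the sum
  of all coefficients of \<open>S\<close> is \<open>S(1) = \<Sum>\<^sub>i |w\<^sub>i(1)|\<^sup>2\<close>, which vanishes when the two
  solutions agree at \<open>1\<close>. Hence all coefficients of \<open>w\<close> vanish.\<close>

definition satisfies_system :: "nat \<Rightarrow> (nat \<Rightarrow> complex poly) \<Rightarrow> (nat \<Rightarrow> complex poly) \<Rightarrow> bool" where
  "satisfies_system m \<zeta> x \<longleftrightarrow>
     (\<forall>i\<in>{1..m-1}. in_Pplus (lp_neg (\<zeta> i) * lp_pos (x m) - lp_tilde (x i))) \<and>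
     in_Pplus ((\<Sum>i\<in>{1..m-1}. lp_neg (\<zeta> i) * lp_pos (x i)) + lp_tilde (x m))"

lemma is_solution_iff:
  "is_solution F N m \<zeta> u \<longleftrightarrow> (\<forall>i\<in>{1..m}. in_PNplus F N (u i)) \<and> satisfies_system m \<zeta> u"
  unfolding is_solution_def satisfies_system_def by blast

lemma in_Pplus_iff_subdegree: "in_Pplus f \<longleftrightarrow> 0 \<le> fls_subdegree f"
  unfolding in_Pplus_def
  using fls_subdegree_ge0I fls_eq0_below_subdegree by fastforce

lemma in_Pplus_mult:
  assumes "in_Pplus f" and "in_Pplus g"
  shows "in_Pplus (f * g)"
proof -
  from assms have "0 \<le> fls_subdegree f" "0 \<le> fls_subdegree g"
    by (simp_all add: in_Pplus_iff_subdegree)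
  then show ?thesis
    unfolding in_Pplus_def by (auto intro!: fls_times_nth_eq0)
qed

lemma in_Pplus_diff: "in_Pplus f \<Longrightarrow> in_Pplus g \<Longrightarrow> in_Pplus (f - g)"
  by (auto simp: in_Pplus_def)

lemma in_Pplus_sum: "(\<And>i. i \<in> A \<Longrightarrow> in_Pplus (f i)) \<Longrightarrow> in_Pplus (\<Sum>i\<in>A. f i)"
  by (auto simp: in_Pplus_def fls_nth_sum)

lemma in_Pplus_lp_pos: "in_Pplus (lp_pos p)"
  unfolding lp_pos_def in_Pplus_def by (simp add: fls_nth_sum)

lemma in_Pplus_self_adjoint_nth_eq_0:
  assumes "in_Pplus f" and "\<And>k. fls_nth f (-k) = cnj (fls_nth f k)" and "k \<noteq> 0"
  shows "fls_nth f k = 0"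
proof (cases "k < 0")
  case False
  with \<open>k \<noteq> 0\<close> have "fls_nth f (-k) = 0"
    using assms(1) by (simp add: in_Pplus_def)
  with assms(2)[of k] show ?thesis by simp
qed (use assms(1) in \<open>simp add: in_Pplus_def\<close>)

lemma lp_pos_eq_sum_atMost:
  assumes "degree p \<le> n"
  shows "lp_pos p = (\<Sum>k\<le>n. fls_const (coeff p k) * fls_X ^ k)"
  unfolding lp_pos_def
  by (rule sum.mono_neutral_left) (use assms in \<open>auto simp: coeff_eq_0\<close>)

lemma lp_tilde_eq_sum_atMost:
  assumes "degree p \<le> n"
  shows "lp_tilde p = (\<Sum>k\<le>n. fls_const (cnj (coeff p k)) * fls_X_inv ^ k)"
proof -
  have "degree (map_poly cnj p) \<le> n"
    using degree_map_poly[of cnj p] assms by simp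
  then have "lp_tilde p = (\<Sum>k\<le>n. fls_const (coeff (map_poly cnj p) k) * fls_X_inv ^ k)"
    unfolding lp_tilde_def lp_neg_def
    by (intro sum.mono_neutral_left) (auto simp: coeff_eq_0)
  then show ?thesis
    by (simp add: coeff_map_poly)
qed

lemma lp_pos_diff: "lp_pos (p - q) = lp_pos p - lp_pos q"
proof -
  define n where "n = max (degree p) (degree q)"
  have "degree (p - q) \<le> n" unfolding n_def by (rule degree_diff_le) auto
  then show ?thesis
    using lp_pos_eq_sum_atMost[of p n] lp_pos_eq_sum_atMost[of q n]
      lp_pos_eq_sum_atMost[of "p - q" n]
    by (simp add: n_def flip: fls_minus_const add: left_diff_distrib sum_subtractf)
qed

lemma lp_tilde_diff: "lp_tilde (p - q) = lp_tilde p - lp_tilde q"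
proof -
  define n where "n = max (degree p) (degree q)"
  have "degree (p - q) \<le> n" unfolding n_def by (rule degree_diff_le) auto
  then show ?thesis
    using lp_tilde_eq_sum_atMost[of p n] lp_tilde_eq_sum_atMost[of q n]
      lp_tilde_eq_sum_atMost[of "p - q" n]
    by (simp add: n_def flip: fls_minus_const add: left_diff_distrib sum_subtractf)
qed

lemma fls_nth_monomial_times_inv_monomial:
  "fls_nth ((fls_const c * fls_X ^ a) * (fls_const d * fls_X_inv ^ b) :: complex fls) k
     = (if k = int a - int b then c * d else 0)"
proof -
  have "(fls_const c * fls_X ^ a) * (fls_const d * fls_X_inv ^ b) =
        fls_const (c * d) * (fls_X ^ a * fls_X_inv ^ b)"
    by (simp flip: fls_const_mult_const add: ac_simps)
  moreover have "fls_nth (fls_X ^ a * fls_X_inv ^ b :: complex fls) k =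
      (if k = int a - int b then 1 else 0)"
    by (simp add: fls_X_inv_power_times_conv_shift(2))
  ultimately show ?thesis
    by (simp only: fls_mult_const_nth(1)) simp
qed

lemma fls_nth_lp_pos_times_lp_tilde:
  assumes "degree p \<le> n"
  shows "fls_nth (lp_pos p * lp_tilde p) k =
    (\<Sum>a\<le>n. \<Sum>b\<le>n. if k = int a - int b then coeff p a * cnj (coeff p b) else 0)"
proof -
  have "lp_pos p * lp_tilde p = (\<Sum>a\<le>n. \<Sum>b\<le>n. (fls_const (coeff p a) * fls_X ^ a) *
      (fls_const (cnj (coeff p b)) * fls_X_inv ^ b))"
    using assms by (simp add: lp_pos_eq_sum_atMost lp_tilde_eq_sum_atMost sum_product)
  then show ?thesis
    by (simp add: fls_nth_sum fls_nth_monomial_times_inv_monomial)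
qed

lemma fls_nth_lp_pos_times_lp_tilde_uminus:
  "fls_nth (lp_pos p * lp_tilde p) (-k) = cnj (fls_nth (lp_pos p * lp_tilde p) k)"
proof -
  have "cnj (fls_nth (lp_pos p * lp_tilde p) k) = (\<Sum>a\<le>degree p. \<Sum>b\<le>degree p.
      if -k = int b - int a then coeff p b * cnj (coeff p a) else 0)"
    unfolding fls_nth_lp_pos_times_lp_tilde[OF order_refl] cnj_sum
    by (intro sum.cong refl) auto
  also have "\<dots> = fls_nth (lp_pos p * lp_tilde p) (-k)"
    unfolding fls_nth_lp_pos_times_lp_tilde[OF order_refl] by (rule sum.swap)
  finally show ?thesis ..
qed

lemma fls_nth_lp_pos_times_lp_tilde_0:
  assumes "degree p \<le> n"
  shows "fls_nth (lp_pos p * lp_tilde p) 0 = of_real (\<Sum>a\<le>n. (norm (coeff p a))\<^sup>2)"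
  unfolding fls_nth_lp_pos_times_lp_tilde[OF assms] of_real_sum complex_norm_square
  by (simp add: sum.delta)

lemma poly_one_eq_sum_coeff:
  fixes p :: "'a::comm_semiring_1 poly"
  assumes "degree p \<le> n"
  shows "poly p 1 = (\<Sum>a\<le>n. coeff p a)"
proof -
  have "poly p 1 = (\<Sum>a\<le>degree p. coeff p a)"
    unfolding poly_altdef by simp
  also have "\<dots> = (\<Sum>a\<le>n. coeff p a)"
    by (rule sum.mono_neutral_left) (use assms in \<open>auto simp: coeff_eq_0\<close>)
  finally show ?thesis .
qed

lemma sum_fls_nth_lp_pos_times_lp_tilde:
  assumes "degree p \<le> n"
  shows "(\<Sum>k\<in>{-int n..int n}. fls_nth (lp_pos p * lp_tilde p) k) = poly p 1 * cnj (poly p 1)"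
proof -
  have "(\<Sum>k\<in>{-int n..int n}. fls_nth (lp_pos p * lp_tilde p) k) =
      (\<Sum>a\<le>n. \<Sum>b\<le>n. \<Sum>k\<in>{-int n..int n}.
         if k = int a - int b then coeff p a * cnj (coeff p b) else 0)"
    unfolding fls_nth_lp_pos_times_lp_tilde[OF assms]
    by (subst sum.swap, rule sum.cong[OF refl], rule sum.swap)
  also have "\<dots> = (\<Sum>a\<le>n. \<Sum>b\<le>n. coeff p a * cnj (coeff p b))"
    by (intro sum.cong refl) (auto simp: sum.delta)
  also have "\<dots> = poly p 1 * cnj (poly p 1)"
    using assms by (simp add: poly_one_eq_sum_coeff sum_product cnj_sum)
  finally show ?thesis .
qed

lemma satisfies_system_diff:
  assumes "satisfies_system m \<zeta> u" and "satisfies_system m \<zeta> v"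
  shows "satisfies_system m \<zeta> (\<lambda>i. u i - v i)"
proof -
  have "lp_neg (\<zeta> i) * lp_pos (u m - v m) - lp_tilde (u i - v i) =
      (lp_neg (\<zeta> i) * lp_pos (u m) - lp_tilde (u i)) -
      (lp_neg (\<zeta> i) * lp_pos (v m) - lp_tilde (v i))" for i
    by (simp add: lp_pos_diff lp_tilde_diff algebra_simps)
  moreover have "(\<Sum>i\<in>{1..m-1}. lp_neg (\<zeta> i) * lp_pos (u i - v i)) + lp_tilde (u m - v m) =
      ((\<Sum>i\<in>{1..m-1}. lp_neg (\<zeta> i) * lp_pos (u i)) + lp_tilde (u m)) -
      ((\<Sum>i\<in>{1..m-1}. lp_neg (\<zeta> i) * lp_pos (v i)) + lp_tilde (v m))"
    by (simp add: lp_pos_diff lp_tilde_diff algebra_simps sum_subtractf)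
  ultimately show ?thesis
    using assms by (auto simp: satisfies_system_def intro: in_Pplus_diff)
qed

lemma satisfies_system_in_Pplus_sum_lp_pos_times_lp_tilde:
  assumes "m \<ge> 1" and "satisfies_system m \<zeta> w"
  shows "in_Pplus (\<Sum>i\<in>{1..m}. lp_pos (w i) * lp_tilde (w i))"
proof -
  define P where "P i = lp_pos (w i)" for i
  define T where "T i = lp_tilde (w i)" for i
  define Z where "Z i = lp_neg (\<zeta> i)" for i
  have "{1..m} = insert m {1..m-1}" and "m \<notin> {1..m-1}"
    using \<open>m \<ge> 1\<close> by auto
  then have "(\<Sum>i\<in>{1..m}. P i * T i) = P m * T m + (\<Sum>i\<in>{1..m-1}. P i * T i)"
    by simp
  moreover have "P m * (\<Sum>i\<in>{1..m-1}. Z i * P i) = (\<Sum>i\<in>{1..m-1}. P i * (Z i * P m))"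
    by (simp add: sum_distrib_left ac_simps)
  ultimately have "(\<Sum>i\<in>{1..m}. P i * T i) =
      P m * ((\<Sum>i\<in>{1..m-1}. Z i * P i) + T m) - (\<Sum>i\<in>{1..m-1}. P i * (Z i * P m - T i))"
    by (simp add: algebra_simps sum_subtractf)
  moreover have "in_Pplus (P m * ((\<Sum>i\<in>{1..m-1}. Z i * P i) + T m))"
    using assms(2) by (intro in_Pplus_mult)
      (auto simp: satisfies_system_def P_def T_def Z_def in_Pplus_lp_pos)
  moreover have "in_Pplus (\<Sum>i\<in>{1..m-1}. P i * (Z i * P m - T i))"
    using assms(2) by (intro in_Pplus_sum in_Pplus_mult)
      (auto simp: satisfies_system_def P_def T_def Z_def in_Pplus_lp_pos)
  ultimately show ?thesis
    unfolding P_def T_def by (simp add: in_Pplus_diff)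
qed

lemma sum_norm_coeff_eq_sum_norm_poly_1:
  assumes "finite I" and "in_Pplus (\<Sum>i\<in>I. lp_pos (w i) * lp_tilde (w i))"
    and deg: "\<And>i. i \<in> I \<Longrightarrow> degree (w i) \<le> n"
  shows "(\<Sum>i\<in>I. \<Sum>a\<le>n. (norm (coeff (w i) a))\<^sup>2) = (\<Sum>i\<in>I. (norm (poly (w i) 1))\<^sup>2)"
proof -
  define S where "S = (\<Sum>i\<in>I. lp_pos (w i) * lp_tilde (w i))"
  have "fls_nth S k = 0" if "k \<noteq> 0" for k
  proof (rule in_Pplus_self_adjoint_nth_eq_0[OF _ _ that])
    show "in_Pplus S"
      unfolding S_def by (fact assms(2))
    show "fls_nth S (-k) = cnj (fls_nth S k)" for k
      unfolding S_def fls_nth_sum cnj_sum fls_nth_lp_pos_times_lp_tilde_uminus ..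
  qed
  then have "fls_nth S 0 = (\<Sum>k\<in>{-int n..int n}. fls_nth S k)"
    by (subst sum.remove[of _ 0]) auto
  also have "\<dots> = (\<Sum>i\<in>I. \<Sum>k\<in>{-int n..int n}. fls_nth (lp_pos (w i) * lp_tilde (w i)) k)"
    unfolding S_def fls_nth_sum by (rule sum.swap)
  also have "\<dots> = (\<Sum>i\<in>I. of_real ((norm (poly (w i) 1))\<^sup>2))"
    by (intro sum.cong refl) (metis deg sum_fls_nth_lp_pos_times_lp_tilde complex_norm_square)
  finally have "of_real (\<Sum>i\<in>I. (norm (poly (w i) 1))\<^sup>2) = fls_nth S 0"
    by (simp only: of_real_sum)
  also have "fls_nth S 0 = (\<Sum>i\<in>I. of_real (\<Sum>a\<le>n. (norm (coeff (w i) a))\<^sup>2))"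
    unfolding S_def fls_nth_sum
    by (intro sum.cong refl fls_nth_lp_pos_times_lp_tilde_0) (simp add: deg)
  finally show ?thesis
    by (simp only: of_real_sum[symmetric] of_real_eq_iff)
qed

theorem satisfies_system_eq_0:
  assumes "m \<ge> 1" and "satisfies_system m \<zeta> w" and "\<forall>i\<in>{1..m}. poly (w i) 1 = 0"
  shows "\<forall>i\<in>{1..m}. w i = 0"
proof
  define n where "n = (\<Sum>i\<in>{1..m}. degree (w i))"
  have deg: "degree (w i) \<le> n" if "i \<in> {1..m}" for i
    unfolding n_def using that by (intro member_le_sum) auto
  have "(\<Sum>i\<in>{1..m}. \<Sum>a\<le>n. (norm (coeff (w i) a))\<^sup>2) = 0"
    using sum_norm_coeff_eq_sum_norm_poly_1[of "{1..m}" w n, OF _ _ deg]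
      satisfies_system_in_Pplus_sum_lp_pos_times_lp_tilde[OF assms(1,2)] assms(3)
    by simp
  then have "(\<Sum>a\<le>n. (norm (coeff (w i) a))\<^sup>2) = 0" if "i \<in> {1..m}" for i
    using that by (subst (asm) sum_nonneg_eq_0_iff) (auto intro: sum_nonneg)
  then have coeff_0: "coeff (w i) a = 0" if "i \<in> {1..m}" "a \<le> n" for i a
    using that by (subst (asm) sum_nonneg_eq_0_iff) auto
  fix i assume i: "i \<in> {1..m}"
  show "w i = 0"
  proof (rule poly_eqI)
    show "coeff (w i) a = coeff 0 a" for a
      using coeff_0[OF i, of a] deg[OF i] by (cases "a \<le> n") (auto simp: coeff_eq_0)
  qed
qed

lemma tilde_eval_1: "tilde_eval p 1 = cnj (poly p 1)"
  unfolding tilde_eval_def poly_altdef cnj_sum by simp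

lemma sol_vec_1_eq_iff:
  assumes "i \<in> {1..m}"
  shows "sol_vec m u 1 i = sol_vec m v 1 i \<longleftrightarrow> poly (u i) 1 = poly (v i) 1"
  using assms by (auto simp: sol_vec_def tilde_eval_1)

lemma sol_vec_1_eq_0_iff:
  assumes "i \<in> {1..m}"
  shows "sol_vec m u 1 i = 0 \<longleftrightarrow> poly (u i) 1 = 0"
  using assms by (auto simp: sol_vec_def tilde_eval_1)

theorem corollary1:
  fixes F :: "complex set" and m N :: nat and \<zeta> :: "nat \<Rightarrow> complex poly"
  assumes "conj_closed_subfield F"
    and "m \<ge> 2" and "N \<ge> 1"
    and "\<forall>i\<in>{1..m-1}. in_PNminus F N (\<zeta> i)"
  shows "(\<forall>u v. is_solution F N m \<zeta> u \<and> is_solution F N m \<zeta> v \<and>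
              (\<forall>i\<in>{1..m}. sol_vec m u 1 i = sol_vec m v 1 i) \<longrightarrow>
              (\<forall>z. z \<noteq> 0 \<longrightarrow> (\<forall>i\<in>{1..m}. sol_vec m u z i = sol_vec m v z i)))
       \<and> (\<forall>u. is_solution F N m \<zeta> u \<and> (\<forall>i\<in>{1..m}. sol_vec m u 1 i = 0) \<longrightarrow>
              (\<forall>z. z \<noteq> 0 \<longrightarrow> (\<forall>i\<in>{1..m}. sol_vec m u z i = 0)))"
proof (intro conjI allI impI)
  \<comment> \<open>Neither the field \<open>F\<close> nor the degree bounds on \<open>\<zeta>\<close> play a role in the argument.\<close>
  have "m \<ge> 1" "m \<in> {1..m}"
    using \<open>m \<ge> 2\<close> by auto
  fix z
  {
    fix u v
    assume "is_solution F N m \<zeta> u \<and> is_solution F N m \<zeta> v \<and>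
      (\<forall>i\<in>{1..m}. sol_vec m u 1 i = sol_vec m v 1 i)"
    then have "\<forall>i\<in>{1..m}. u i - v i = 0"
      using \<open>m \<ge> 1\<close> by (intro satisfies_system_eq_0 satisfies_system_diff)
        (auto simp: is_solution_iff sol_vec_1_eq_iff)
    then show "\<forall>i\<in>{1..m}. sol_vec m u z i = sol_vec m v z i"
      using \<open>m \<in> {1..m}\<close> by (auto simp: sol_vec_def)
  }
  {
    fix u
    assume "is_solution F N m \<zeta> u \<and> (\<forall>i\<in>{1..m}. sol_vec m u 1 i = 0)"
    then have "\<forall>i\<in>{1..m}. u i = 0"
      using \<open>m \<ge> 1\<close> by (intro satisfies_system_eq_0)
        (auto simp: is_solution_iff sol_vec_1_eq_0_iff)
    then show "\<forall>i\<in>{1..m}. sol_vec m u z i = 0"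
      using \<open>m \<in> {1..m}\<close> by (auto simp: sol_vec_def tilde_eval_def)
  }
qed

end
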